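(* There is no computable probability measure $\xi$ on $2^\omega$ such that for every computable $c\in[0,1]$ we have $\mathsf{MLR}_\xi\cap\mathsf{MLR}_{\mu_c}\neq\emptyset$. (In the paper's words: there is no computable mixture of Bernoulli measures that includes all computable Bernoulli measures.)
   Context: For $p\in[0,1]$ the Bernoulli measure $\mu_p$ on $2^\omega$ is determined by $\mu_p(\llbracket\sigma\rrbracket)=p^{\#_0(\sigma)}(1-p)^{\#_1(\sigma)}$, where $\#_i(\sigma)$ is the number of occurrences of $i$ in $\sigma$. For computable $\mu$, $\mathsf{MLR}_\mu$ denotes the set of $\mu$-Martin-Löf random sequences. *)

theory Defs
  imports "HOL-Probability.Probability" "HOL-Library.Nat_Bijection"
begin

datatype recf = Zero | Succ | Proj nat | Comp recf "recf list" | Prim recf recf | Mn recf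

inductive reval :: "recf \<Rightarrow> nat list \<Rightarrow> nat \<Rightarrow> bool" where
  zero: "reval Zero xs 0"
| succ: "reval Succ (x # xs) (Suc x)"
| proj: "i < length xs \<Longrightarrow> reval (Proj i) xs (xs ! i)"
| comp: "length ys = length gs \<Longrightarrow> (\<forall>i < length gs. reval (gs ! i) xs (ys ! i))
          \<Longrightarrow> reval f ys z \<Longrightarrow> reval (Comp f gs) xs z"
| prim0: "reval f xs y \<Longrightarrow> reval (Prim f g) (0 # xs) y"
| primS: "reval (Prim f g) (n # xs) y \<Longrightarrow> reval g (n # y # xs) z
          \<Longrightarrow> reval (Prim f g) (Suc n # xs) z"
| mn: "reval f (n # xs) 0 \<Longrightarrow> (\<forall>m < n. \<exists>y. reval f (m # xs) (Suc y))
          \<Longrightarrow> reval (Mn f) xs n"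

definition computable1 :: "(nat \<Rightarrow> nat) \<Rightarrow> bool" where
  "computable1 f \<longleftrightarrow> (\<exists>r. \<forall>n. reval r [n] (f n))"

definition computable2 :: "(nat \<Rightarrow> nat \<Rightarrow> nat) \<Rightarrow> bool" where
  "computable2 f \<longleftrightarrow> (\<exists>r. \<forall>m n. reval r [m, n] (f m n))"

definition ce_set :: "nat set \<Rightarrow> bool" where
  "ce_set S \<longleftrightarrow> (\<exists>r. \<forall>x. x \<in> S \<longleftrightarrow> (\<exists>y. reval r [x] y))"

text \<open>Binary strings are bool lists; True = bit 1, False = bit 0.\<close>
definition code :: "bool list \<Rightarrow> nat" where
  "code \<sigma> = list_encode (map of_bool \<sigma>)"

definition cyl :: "bool list \<Rightarrow> (nat \<Rightarrow> bool) set" where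
  "cyl \<sigma> = {X. \<forall>i < length \<sigma>. X i = \<sigma> ! i}"

definition cantor :: "(nat \<Rightarrow> bool) measure" where
  "cantor = PiM UNIV (\<lambda>_. count_space UNIV)"

definition rat_approx :: "nat \<Rightarrow> nat \<Rightarrow> real" where
  "rat_approx a b = real_of_int (int_decode a) / real (Suc b)"

definition computable_real :: "real \<Rightarrow> bool" where
  "computable_real x \<longleftrightarrow> (\<exists>a b. computable1 a \<and> computable1 b \<and>
      (\<forall>n. \<bar>x - rat_approx (a n) (b n)\<bar> \<le> 1 / 2 ^ n))"

definition computable_measure :: "(nat \<Rightarrow> bool) measure \<Rightarrow> bool" where
  "computable_measure M \<longleftrightarrow> (\<exists>a b. computable2 a \<and> computable2 b \<and>
      (\<forall>\<sigma> n. \<bar>measure M (cyl \<sigma>) - rat_approx (a (code \<sigma>) n) (b (code \<sigma>) n)\<bar> \<le> 1 / 2 ^ n))"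

text \<open>Bernoulli measure: each bit independently is 0 with probability p.\<close>
definition bernoulli_measure :: "real \<Rightarrow> (nat \<Rightarrow> bool) measure" where
  "bernoulli_measure p = PiM UNIV (\<lambda>_. measure_pmf (bernoulli_pmf (1 - p)))"

text \<open>A c.e. set W of codes of pairs (n, sigma) describes the uniformly c.e.
  sequence of open sets U_n.\<close>
definition test_level :: "nat set \<Rightarrow> nat \<Rightarrow> (nat \<Rightarrow> bool) set" where
  "test_level W n = (\<Union>\<sigma> \<in> {\<sigma>. prod_encode (n, code \<sigma>) \<in> W}. cyl \<sigma>)"

definition martin_loef_test :: "(nat \<Rightarrow> bool) measure \<Rightarrow> nat set \<Rightarrow> bool" where
  "martin_loef_test M W \<longleftrightarrow> ce_set W \<and> (\<forall>n. emeasure M (test_level W n) \<le> ennreal (1 / 2 ^ n))"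

definition MLR :: "(nat \<Rightarrow> bool) measure \<Rightarrow> (nat \<Rightarrow> bool) set" where
  "MLR M = {X. \<forall>W. martin_loef_test M W \<longrightarrow> X \<notin> (\<Inter>n. test_level W n)}"

end

theory Submission
  imports Defs
begin

text \<open>
  We compute a bias \<open>c\<close> by nested dyadic intervals. At stage \<open>k\<close> the
  current interval of width \<open>2 ^ - prec k\<close> is split into \<open>2 ^ (k + 5)\<close> subintervals; for each
  we approximate the \<open>\<xi>\<close>-mass of the blocks of length \<open>block_len k\<close> whose frequency of zeros
  lies within about \<open>2 ^ - prec (k + 1)\<close> of that subinterval, and we keep the subinterval of
  least mass. A block is typical for at most four subintervals, so the chosen mass is at most
  \<open>2 ^ -(k + 2)\<close>. Hence the typical blocks of all stages \<open>\<ge> m\<close> form a Martin-Loef test for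
  \<open>\<xi>\<close>, while by Chebyshev's inequality the atypical blocks of all stages \<open>\<ge> m\<close> form one for
  \<open>\<mu>\<^sub>c\<close>. Every sequence is caught by one of the two tests, so none is random for both.
\<close>

section \<open>Total computable functions\<close>

text \<open>A function of \<open>n\<close> arguments is represented as a function of an environment \<open>e\<close> that
  reads only \<open>e 0, \<dots>, e (n - 1)\<close>; this makes composition and recursion easy to state.\<close>

definition rec_computable :: "nat \<Rightarrow> ((nat \<Rightarrow> nat) \<Rightarrow> nat) \<Rightarrow> bool" where
  "rec_computable n F \<longleftrightarrow> (\<exists>r. \<forall>e. reval r (map e [0..<n]) (F e))"

definition rec_decidable :: "nat \<Rightarrow> ((nat \<Rightarrow> nat) \<Rightarrow> bool) \<Rightarrow> bool" where
  "rec_decidable n P \<longleftrightarrow> rec_computable n (\<lambda>e. of_bool (P e))"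

named_theorems rec_computable_intros

lemma map_upt_Suc_shift: "map e [0..<Suc m] = e 0 # map (\<lambda>i. e (Suc i)) [0..<m]"
  by (induction m) auto

lemma rec_computable_cong: "rec_computable n F \<Longrightarrow> (\<And>e. F e = G e) \<Longrightarrow> rec_computable n G"
  unfolding rec_computable_def by metis

lemma rec_decidable_cong: "rec_decidable n P \<Longrightarrow> (\<And>e. P e = Q e) \<Longrightarrow> rec_decidable n Q"
  unfolding rec_decidable_def by (erule rec_computable_cong) simp

lemma rec_computable_const [rec_computable_intros]: "rec_computable n (\<lambda>e. c)"
proof (induction c)
  case 0
  then show ?case unfolding rec_computable_def by (auto intro: reval.zero)
next
  case (Suc c)
  then obtain r where r: "\<forall>e. reval r (map e [0..<n]) c" unfolding rec_computable_def by auto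
  have "reval (Comp Succ [r]) (map e [0..<n]) (Suc c)" for e
    by (rule reval.comp[of "[c]"]) (use r in \<open>auto intro: reval.succ\<close>)
  then show ?case unfolding rec_computable_def by blast
qed

lemma rec_computable_proj [rec_computable_intros]: "i < n \<Longrightarrow> rec_computable n (\<lambda>e. e i)"
  unfolding rec_computable_def
  by (rule exI[of _ "Proj i"]) (auto intro!: reval.proj[of i "map _ [0..<n]", simplified])

lemma rec_computable_comp:
  assumes "rec_computable m F" "\<And>i. i < m \<Longrightarrow> rec_computable n (G i)"
  shows "rec_computable n (\<lambda>e. F (\<lambda>i. G i e))"
proof -
  obtain r where r: "\<forall>e. reval r (map e [0..<m]) (F e)"
    using assms(1) unfolding rec_computable_def by auto
  have "\<forall>i<m. \<exists>s. \<forall>e. reval s (map e [0..<n]) (G i e)"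
    using assms(2) unfolding rec_computable_def by auto
  then obtain s where s: "\<forall>i<m. \<forall>e. reval (s i) (map e [0..<n]) (G i e)" by metis
  have "reval (Comp r (map s [0..<m])) (map e [0..<n]) (F (\<lambda>i. G i e))" for e
  proof (rule reval.comp[of "map (\<lambda>i. G i e) [0..<m]"])
    show "reval r (map (\<lambda>i. G i e) [0..<m]) (F (\<lambda>i. G i e))" using r by blast
  qed (use s in auto)
  then show ?thesis unfolding rec_computable_def by blast
qed

lemma rec_computable_reindex:
  assumes "rec_computable m F" "\<And>i. i < m \<Longrightarrow> s i < n"
  shows "rec_computable n (\<lambda>e. F (\<lambda>i. e (s i)))"
  using rec_computable_comp[OF assms(1), of n "\<lambda>i e. e (s i)"] assms(2) rec_computable_proj
  by auto

lemma rec_computable_Suc [rec_computable_intros]: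
  assumes "rec_computable n F"
  shows "rec_computable n (\<lambda>e. Suc (F e))"
proof -
  have "rec_computable 1 (\<lambda>e. Suc (e 0))"
    unfolding rec_computable_def by (rule exI[of _ Succ]) (auto intro: reval.succ)
  from rec_computable_comp[OF this, of n "\<lambda>i. F"] assms show ?thesis by simp
qed

lemma rec_computable_Prim:
  assumes "rec_computable n F"
    and "rec_computable (Suc (Suc n)) (\<lambda>e. G (e 0) (e 1) (\<lambda>i. e (Suc (Suc i))))"
  shows "rec_computable (Suc n)
           (\<lambda>e. rec_nat (F (\<lambda>i. e (Suc i))) (\<lambda>k acc. G k acc (\<lambda>i. e (Suc i))) (e 0))"
proof -
  obtain f where f: "\<forall>e. reval f (map e [0..<n]) (F e)"
    using assms(1) unfolding rec_computable_def by auto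
  obtain g where g: "\<forall>e. reval g (map e [0..<Suc (Suc n)]) (G (e 0) (e 1) (\<lambda>i. e (Suc (Suc i))))"
    using assms(2) unfolding rec_computable_def by auto
  have "reval (Prim f g) (k # map e [0..<n]) (rec_nat (F e) (\<lambda>k acc. G k acc e) k)" for k e
  proof (induction k)
    case 0
    then show ?case using f by (auto intro: reval.prim0)
  next
    case (Suc k)
    let ?acc = "rec_nat (F e) (\<lambda>k acc. G k acc e) k"
    have "reval g (k # ?acc # map e [0..<n]) (G k ?acc e)"
      using g[rule_format, of "\<lambda>i. if i = 0 then k else if i = 1 then ?acc else e (i - 2)"]
      by (simp add: map_upt_Suc_shift del: upt_Suc)
    then show ?case using Suc by (auto intro: reval.primS)
  qed
  then show ?thesis
    unfolding rec_computable_def by (metis map_upt_Suc_shift)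
qed

lemma rec_computable_rec_nat [rec_computable_intros]:
  assumes "rec_computable n T" "rec_computable n F"
    and "rec_computable (Suc (Suc n)) (\<lambda>e. G (e 0) (e 1) (\<lambda>i. e (Suc (Suc i))))"
  shows "rec_computable n (\<lambda>e. rec_nat (F e) (\<lambda>k acc. G k acc e) (T e))"
proof -
  have "rec_computable n (\<lambda>e. (\<lambda>e'. rec_nat (F (\<lambda>i. e' (Suc i)))
          (\<lambda>k acc. G k acc (\<lambda>i. e' (Suc i))) (e' 0)) (\<lambda>i. (if i = 0 then T else (\<lambda>e. e (i - 1))) e))"
    by (rule rec_computable_comp[OF rec_computable_Prim[OF assms(2,3)]])
      (auto intro: assms(1) rec_computable_proj)
  then show ?thesis by simp
qed

lemma rec_computable_add [rec_computable_intros]: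
  assumes "rec_computable n f" "rec_computable n g"
  shows "rec_computable n (\<lambda>e. f e + g e)"
proof -
  have "rec_computable n (\<lambda>e. rec_nat (f e) (\<lambda>k acc. Suc acc) (g e))"
    by (intro rec_computable_intros assms) simp
  moreover have "rec_nat x (\<lambda>k acc. Suc acc) y = x + y" for x y :: nat by (induction y) auto
  ultimately show ?thesis by simp
qed

lemma rec_computable_pred:
  assumes "rec_computable n f"
  shows "rec_computable n (\<lambda>e. f e - 1)"
proof -
  have "rec_computable n (\<lambda>e. rec_nat 0 (\<lambda>k acc. k) (f e))"
    by (intro rec_computable_intros assms) simp
  moreover have "rec_nat 0 (\<lambda>k acc. k) y = y - 1" for y :: nat by (induction y) auto
  ultimately show ?thesis by simp
qed

lemma rec_computable_diff [rec_computable_intros]: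
  assumes "rec_computable n f" "rec_computable n g"
  shows "rec_computable n (\<lambda>e. f e - g e)"
proof -
  have "rec_computable n (\<lambda>e. rec_nat (f e) (\<lambda>k acc. acc - 1) (g e))"
    by (intro rec_computable_intros rec_computable_pred assms) simp
  moreover have "rec_nat x (\<lambda>k acc. acc - 1) y = x - y" for x y :: nat by (induction y) auto
  ultimately show ?thesis by simp
qed

lemma rec_computable_lift2:
  "rec_computable n f \<Longrightarrow> rec_computable (Suc (Suc n)) (\<lambda>e. f (\<lambda>i. e (Suc (Suc i))))"
  by (rule rec_computable_reindex) simp_all

lemma rec_computable_mult [rec_computable_intros]:
  assumes "rec_computable n f" "rec_computable n g"
  shows "rec_computable n (\<lambda>e. f e * g e)"
proof -
  have "rec_computable n (\<lambda>e. rec_nat 0 (\<lambda>k acc. acc + f e) (g e))"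
    by (intro rec_computable_intros assms rec_computable_lift2) simp
  moreover have "rec_nat 0 (\<lambda>k acc. acc + x) y = x * y" for x y :: nat by (induction y) auto
  ultimately show ?thesis by simp
qed

lemma rec_computable_power [rec_computable_intros]:
  assumes "rec_computable n f" "rec_computable n g"
  shows "rec_computable n (\<lambda>e. f e ^ g e)"
proof -
  have "rec_computable n (\<lambda>e. rec_nat 1 (\<lambda>k acc. acc * f e) (g e))"
    by (intro rec_computable_intros assms rec_computable_lift2) simp_all
  moreover have "rec_nat 1 (\<lambda>k acc. acc * x) y = x ^ y" for x y :: nat by (induction y) auto
  ultimately show ?thesis by simp
qed

lemma rec_computable_if_zero:
  assumes "rec_computable n f" "rec_computable n g" "rec_computable n h"
  shows "rec_computable n (\<lambda>e. if f e = 0 then g e else h e)"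
proof -
  have "rec_computable n (\<lambda>e. rec_nat (g e) (\<lambda>k acc. h e) (f e))"
    by (intro rec_computable_intros assms rec_computable_lift2)
  moreover have "rec_nat x (\<lambda>k acc. z) y = (if y = 0 then x else z)" for x y z :: nat
    by (cases y) auto
  ultimately show ?thesis by simp
qed

lemma rec_computable_if [rec_computable_intros]:
  assumes "rec_decidable n P" "rec_computable n f" "rec_computable n g"
  shows "rec_computable n (\<lambda>e. if P e then f e else g e)"
  using rec_computable_if_zero[OF assms(1)[unfolded rec_decidable_def] assms(3,2)]
  by (rule rec_computable_cong) simp

lemma rec_computable_sum [rec_computable_intros]:
  assumes "rec_computable n T" "rec_computable (Suc n) (\<lambda>e. f (e 0) (\<lambda>i. e (Suc i)))"
  shows "rec_computable n (\<lambda>e. \<Sum>i<T e. f i e)"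
proof -
  have "rec_computable (Suc (Suc n)) (\<lambda>e. (\<lambda>e'. f (e' 0) (\<lambda>i. e' (Suc i)))
          (\<lambda>i. e (if i = 0 then 0 else Suc i)))"
    by (rule rec_computable_reindex[OF assms(2)]) auto
  then have "rec_computable n (\<lambda>e. rec_nat 0 (\<lambda>k acc. acc + f k e) (T e))"
    by (intro rec_computable_intros assms) simp_all
  moreover have "rec_nat 0 (\<lambda>k acc. acc + f k e) y = (\<Sum>i<y. f i e)" for y e
    by (induction y) auto
  ultimately show ?thesis by simp
qed

lemma rec_decidable_le [rec_computable_intros]:
  assumes "rec_computable n f" "rec_computable n g"
  shows "rec_decidable n (\<lambda>e. f e \<le> g e)"
proof -
  have "rec_computable n (\<lambda>e. if f e - g e = 0 then 1 else 0)"
    by (intro rec_computable_if_zero rec_computable_intros assms)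
  then show ?thesis unfolding rec_decidable_def by (rule rec_computable_cong) simp
qed

lemma rec_decidable_less [rec_computable_intros]:
  assumes "rec_computable n f" "rec_computable n g"
  shows "rec_decidable n (\<lambda>e. f e < g e)"
  using rec_decidable_le[OF rec_computable_Suc[OF assms(1)] assms(2)] by (simp add: Suc_le_eq)

lemma rec_decidable_conj [rec_computable_intros]:
  assumes "rec_decidable n P" "rec_decidable n Q"
  shows "rec_decidable n (\<lambda>e. P e \<and> Q e)"
  using rec_computable_mult[OF assms[unfolded rec_decidable_def]] unfolding rec_decidable_def
  by (rule rec_computable_cong) simp

lemma rec_decidable_not [rec_computable_intros]:
  assumes "rec_decidable n P"
  shows "rec_decidable n (\<lambda>e. \<not> P e)"
  using rec_computable_diff[OF rec_computable_const assms[unfolded rec_decidable_def], of 1]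
  unfolding rec_decidable_def by (rule rec_computable_cong) simp

lemma rec_decidable_eq [rec_computable_intros]:
  assumes "rec_computable n f" "rec_computable n g"
  shows "rec_decidable n (\<lambda>e. f e = g e)"
  using rec_decidable_conj[OF rec_decidable_le[OF assms] rec_decidable_le[OF assms(2,1)]]
  by (simp add: order_eq_iff)

lemma rec_decidable_bex [rec_computable_intros]:
  assumes "rec_computable n T" "rec_decidable (Suc n) (\<lambda>e. P (e 0) (\<lambda>i. e (Suc i)))"
  shows "rec_decidable n (\<lambda>e. \<exists>i<T e. P i e)"
proof -
  have "rec_decidable n (\<lambda>e. (\<Sum>i<T e. of_bool (P i e)) \<noteq> (0::nat))"
    by (intro rec_computable_intros assms)
      (use assms(2) in \<open>simp add: rec_decidable_def\<close>)
  then show ?thesis by (rule rec_decidable_cong) (auto simp: sum_nonneg_eq_0_iff)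
qed

lemma rec_computable_div [rec_computable_intros]:
  assumes "rec_computable n f" "rec_computable n g"
  shows "rec_computable n (\<lambda>e. f e div g e)"
proof -
  have count: "x div y = (if y = 0 then 0 else \<Sum>i<x. of_bool (Suc i * y \<le> x))" for x y :: nat
  proof (cases "y = 0")
    case False
    have "i < x div y \<longleftrightarrow> Suc i * y \<le> x" for i
      using False by (simp only: Suc_le_eq[symmetric] less_eq_div_iff_mult_less_eq)
    moreover have "Suc i * y \<le> x \<Longrightarrow> i < x" for i
      using False le_trans[of "Suc i" "Suc i * y" x] by (simp del: mult_Suc)
    ultimately have "{i. i < x \<and> Suc i * y \<le> x} = {..<x div y}" by blast
    then show ?thesis
      using False by (simp add: sum.If_cases Int_def flip: lessThan_def)
  qed simp
  have "rec_computable n (\<lambda>e. if g e = 0 then 0 else \<Sum>i<f e. of_bool (Suc i * g e \<le> f e))"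
    by (intro rec_computable_intros assms
          rec_computable_reindex[OF assms(1), where s=Suc, simplified]
          rec_computable_reindex[OF assms(2), where s=Suc, simplified]
        | simp add: rec_decidable_def[symmetric])+
  then show ?thesis by (simp only: count[symmetric])
qed

lemma rec_computable_mod [rec_computable_intros]:
  assumes "rec_computable n f" "rec_computable n g"
  shows "rec_computable n (\<lambda>e. f e mod g e)"
  using rec_computable_diff[OF assms(1) rec_computable_mult[OF assms(2) rec_computable_div[OF assms]]]
  by (simp add: minus_mult_div_eq_mod)

lemma rec_decidable_even [rec_computable_intros]:
  assumes "rec_computable n f"
  shows "rec_decidable n (\<lambda>e. even (f e))"
  using rec_decidable_eq[OF rec_computable_mod[OF assms rec_computable_const[of n 2]]
      rec_computable_const[of n 0]]
  by (simp add: even_iff_mod_2_eq_zero)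

lemma rec_computable_prod_encode [rec_computable_intros]:
  assumes "rec_computable n f" "rec_computable n g"
  shows "rec_computable n (\<lambda>e. prod_encode (f e, g e))"
proof -
  have "rec_computable n (\<lambda>e. rec_nat 0 (\<lambda>k acc. acc + Suc k) (f e + g e) + f e)"
    by (intro rec_computable_intros assms) simp_all
  moreover have "rec_nat 0 (\<lambda>k acc. acc + Suc k) y = triangle y" for y
    by (induction y) auto
  ultimately show ?thesis by (simp add: prod_encode_def)
qed

lemma reval_deterministic: "reval r xs y \<Longrightarrow> reval r xs y' \<Longrightarrow> y = y'"
proof (induct arbitrary: y' rule: reval.induct)
  case (zero xs) then show ?case by (cases rule: reval.cases) auto
next
  case (succ x xs) then show ?case by (cases rule: reval.cases) auto
next
  case (proj i xs) from proj.prems show ?case by (cases rule: reval.cases) auto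
next
  case (comp ys gs xs f z)
  from comp.prems show ?case
  proof (cases rule: reval.cases)
    case (comp ys')
    have "ys' = ys" using comp comp.hyps(1,2) by (intro nth_equalityI) auto
    then show ?thesis using comp comp.hyps(4) by auto
  qed
next
  case (prim0 f xs y g)
  from prim0.prems show ?case by (cases rule: reval.cases) (use prim0.hyps in auto)
next
  case (primS f g n xs y z)
  from primS.prems show ?case
  proof (cases rule: reval.cases)
    case (primS y2)
    then have "y2 = y" using primS.hyps(2) by auto
    then show ?thesis using primS primS.hyps(4) by auto
  qed
next
  case (mn f n xs)
  from mn.prems show ?case
  proof (cases rule: reval.cases)
    case mn
    show ?thesis
    proof (rule ccontr)
      assume "n \<noteq> y'"
      then consider "n < y'" | "y' < n" by linarith
      then show False
      proof cases
        case 1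
        then obtain v where "reval f (n # xs) (Suc v)" using mn by blast
        then show False using mn.hyps(2) by fastforce
      next
        case 2
        then obtain v where "reval f (y' # xs) (Suc v)"
          and "\<forall>y''. reval f (y' # xs) y'' \<longrightarrow> Suc v = y''"
          using mn.hyps(3) by blast
        then show False using mn by fastforce
      qed
    qed
  qed
qed

lemma map_upt_2: "map e [0..<2] = [e 0, e 1]"
  by (simp add: upt_rec)

lemma computable1_if_rec_computable: "rec_computable 1 (\<lambda>e. f (e 0)) \<Longrightarrow> computable1 f"
proof -
  assume "rec_computable 1 (\<lambda>e. f (e 0))"
  then obtain r where r: "\<forall>e. reval r (map e [0..<1]) (f (e 0))"
    unfolding rec_computable_def by auto
  have "reval r [n] (f n)" for n using r[rule_format, of "\<lambda>_. n"] by simp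
  then show ?thesis unfolding computable1_def by blast
qed

lemma rec_computable_computable2:
  assumes "computable2 a" "rec_computable n f" "rec_computable n g"
  shows "rec_computable n (\<lambda>e. a (f e) (g e))"
proof -
  have "rec_computable 2 (\<lambda>e. a (e 0) (e 1))"
    using assms(1) unfolding computable2_def rec_computable_def by (metis map_upt_2)
  from rec_computable_comp[OF this, of n "\<lambda>i. if i = 0 then f else g"] assms(2,3)
  show ?thesis by simp
qed

text \<open>A set is c.e. if it is the projection of a decidable relation: the
  \<open>\<mu>\<close>-operator searches for a witness.\<close>

lemma ce_set_projection:
  assumes "rec_decidable 2 (\<lambda>e. Q (e 0) (e 1))"
  shows "ce_set {x. \<exists>j. Q j x}"
proof -
  have "rec_computable 2 (\<lambda>e. if Q (e 0) (e 1) then 0 else 1)"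
    by (intro rec_computable_intros assms)
  then obtain f where f: "\<forall>e. reval f (map e [0..<2]) (if Q (e 0) (e 1) then 0 else 1)"
    unfolding rec_computable_def by auto
  have f2: "reval f [j, x] (if Q j x then 0 else 1)" for j x
    using f[rule_format, of "\<lambda>i. if i = 0 then j else x"] by (simp add: map_upt_2)
  have "(\<exists>j. Q j x) \<longleftrightarrow> (\<exists>y. reval (Mn f) [x] y)" for x
  proof
    assume "\<exists>j. Q j x"
    define j where "j = (LEAST j. Q j x)"
    have "Q j x" and "\<forall>m<j. \<not> Q m x"
      unfolding j_def using \<open>\<exists>j. Q j x\<close> by (auto intro: LeastI_ex dest: not_less_Least)
    then have "reval (Mn f) [x] j"
    proof (intro reval.mn allI impI)
      show "reval f [j, x] 0" using f2[of j x] \<open>Q j x\<close> by simp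
      fix m assume "m < j"
      then have "reval f [m, x] (Suc 0)" using f2[of m x] \<open>\<forall>m<j. \<not> Q m x\<close> by simp
      then show "\<exists>y. reval f (m # [x]) (Suc y)" by blast
    qed
    then show "\<exists>y. reval (Mn f) [x] y" by blast
  next
    assume "\<exists>y. reval (Mn f) [x] y"
    then obtain y where "reval (Mn f) [x] y" by blast
    then have "reval f [y, x] 0" by (cases rule: reval.cases) auto
    then have "(if Q y x then 0 else 1) = (0::nat)" using f2[of y x] reval_deterministic by blast
    then have "Q y x" by (cases "Q y x") auto
    then show "\<exists>j. Q j x" by blast
  qed
  then show ?thesis unfolding ce_set_def by blast
qed

section \<open>Blocks of bits coded by numbers\<close>

text \<open>\<open>bits N s\<close> lists the \<open>N\<close> lowest binary digits of \<open>s\<close>, lowest first, so the numbers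
  \<open>s < 2 ^ N\<close> enumerate all blocks of length \<open>N\<close>.\<close>

primrec bits :: "nat \<Rightarrow> nat \<Rightarrow> bool list" where
  "bits 0 s = []"
| "bits (Suc N) s = odd s # bits N (s div 2)"

lemma length_bits [simp]: "length (bits N s) = N"
  by (induction N arbitrary: s) auto

lemma bits_inj: "s < 2 ^ N \<Longrightarrow> t < 2 ^ N \<Longrightarrow> bits N s = bits N t \<Longrightarrow> s = t"
proof (induction N arbitrary: s t)
  case (Suc N)
  have "s div 2 = t div 2" using Suc by (auto simp: less_mult_imp_div_less)
  moreover have "odd s = odd t" using Suc.prems by simp
  ultimately show ?case by (metis div_mult_mod_eq odd_iff_mod_2_eq_one parity_cases)
qed simp

lemma bits_surj: "\<exists>s < 2 ^ N. bits N s = map X [0..<N]"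
proof (induction N arbitrary: X)
  case (Suc N)
  obtain t where t: "t < 2 ^ N" "bits N t = map (\<lambda>i. X (Suc i)) [0..<N]" using Suc by blast
  have "of_bool (X 0) + 2 * t < 2 ^ Suc N" using t(1) by auto
  moreover have "bits (Suc N) (of_bool (X 0) + 2 * t) = map X [0..<Suc N]"
    using t(2) by (simp add: map_upt_Suc_shift del: upt_Suc)
  ultimately show ?case by blast
qed simp

lemma cyl_bits_disjoint: "S \<subseteq> {..<2 ^ N} \<Longrightarrow> disjoint_family_on (\<lambda>s. cyl (bits N s)) S"
proof (unfold disjoint_family_on_def, intro ballI impI)
  fix s t assume "S \<subseteq> {..<2 ^ N}" "s \<in> S" "t \<in> S" "s \<noteq> t"
  then have "bits N s \<noteq> bits N t" using bits_inj by blast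
  then obtain i where "i < N" "bits N s ! i \<noteq> bits N t ! i"
    using nth_equalityI[of "bits N s" "bits N t"] by auto
  then show "cyl (bits N s) \<inter> cyl (bits N t) = {}" unfolding cyl_def by auto
qed

lemma cyl_bits_cover: "\<exists>s < 2 ^ N. X \<in> cyl (bits N s)"
  using bits_surj[of N X] unfolding cyl_def by auto

lemma sum_bits_Suc:
  "(\<Sum>s<2 ^ Suc N. g (bits (Suc N) s)) = (\<Sum>t<2 ^ N. g (False # bits N t) + g (True # bits N t))"
proof -
  have "(\<Sum>s<2 * M. f s) = (\<Sum>t<M. f (2 * t) + f (Suc (2 * t)))"
    for M and f :: "nat \<Rightarrow> 'a::comm_monoid_add"
    by (induction M) (auto simp: add_ac)
  from this[of "\<lambda>s. g (bits (Suc N) s)" "2 ^ N"] show ?thesis by (simp add: mult.commute)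
qed

lemma code_inj: "code x = code y \<Longrightarrow> x = y"
  unfolding code_def by (auto simp: list_encode_eq inj_on_def intro: map_injective)

definition bits_code :: "nat \<Rightarrow> nat \<Rightarrow> nat" where
  "bits_code N s = rec_nat 0 (\<lambda>i acc. Suc (prod_encode (s div 2 ^ (N - Suc i) mod 2, acc))) N"

lemma bits_code_eq: "bits_code N s = code (bits N s)"
proof -
  have "i \<le> N \<Longrightarrow> rec_nat 0 (\<lambda>i acc. Suc (prod_encode (s div 2 ^ (N - Suc i) mod 2, acc))) i
          = code (bits i (s div 2 ^ (N - i)))" for i
  proof (induction i)
    case (Suc i)
    have "N - i = Suc (N - Suc i)" using Suc.prems by simp
    then have "s div 2 ^ (N - Suc i) div 2 = s div 2 ^ (N - i)"
      by (simp only: power_Suc div_mult2_eq) (metis div_mult2_eq mult.commute)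
    moreover have "of_bool (odd (s div 2 ^ (N - Suc i))) = s div 2 ^ (N - Suc i) mod (2::nat)"
      by (simp add: odd_iff_mod_2_eq_one)
    ultimately show ?case using Suc by (simp add: code_def)
  qed (simp add: code_def)
  from this[of N] show ?thesis unfolding bits_code_def by simp
qed

definition zero_count :: "nat \<Rightarrow> nat \<Rightarrow> nat" where
  "zero_count N s = (\<Sum>i<N. 1 - s div 2 ^ i mod 2)"

lemma zero_count_eq: "zero_count N s = count_list (bits N s) False"
proof (induction N arbitrary: s)
  case (Suc N)
  have "zero_count (Suc N) s = (1 - s mod 2) + zero_count N (s div 2)"
    unfolding zero_count_def
    by (simp add: sum.lessThan_Suc_shift div_mult2_eq del: sum.lessThan_Suc)
  then show ?case using Suc by (simp add: odd_iff_mod_2_eq_one)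
qed (simp add: zero_count_def)

lemma rec_computable_bits_code [rec_computable_intros]:
  "rec_computable n f \<Longrightarrow> rec_computable n g \<Longrightarrow> rec_computable n (\<lambda>e. bits_code (f e) (g e))"
  unfolding bits_code_def by (intro rec_computable_intros rec_computable_lift2) simp_all

lemma rec_computable_zero_count [rec_computable_intros]:
  "rec_computable n f \<Longrightarrow> rec_computable n g \<Longrightarrow> rec_computable n (\<lambda>e. zero_count (f e) (g e))"
  unfolding zero_count_def
  by (intro rec_computable_intros rec_computable_reindex[where s=Suc]) simp_all

lemma cyl_in_sets_cantor: "cyl \<sigma> \<in> sets cantor"
proof -
  have "cyl \<sigma> = {X \<in> space cantor. \<forall>i\<in>{..<length \<sigma>}. X i = \<sigma> ! i}"
    unfolding cyl_def cantor_def by (auto simp: space_PiM)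
  also have "\<dots> \<in> sets cantor" unfolding cantor_def by measurable
  finally show ?thesis .
qed

lemma UN_cyl_bits_in_sets_cantor: "finite S \<Longrightarrow> (\<Union>s\<in>S. cyl (bits N s)) \<in> sets cantor"
  using cyl_in_sets_cantor by (intro sets.finite_UN) auto

lemma sets_bernoulli_measure: "sets (bernoulli_measure c) = sets cantor"
  unfolding bernoulli_measure_def cantor_def by (rule sets_PiM_cong) auto

lemma emeasure_UN_cyl_bits:
  assumes "prob_space \<xi>" "sets \<xi> = sets cantor" "S \<subseteq> {..<2 ^ N}"
  shows "emeasure \<xi> (\<Union>s\<in>S. cyl (bits N s)) = ennreal (\<Sum>s\<in>S. measure \<xi> (cyl (bits N s)))"
proof -
  interpret prob_space \<xi> by fact
  have "finite S" using assms(3) finite_subset by blast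
  then have "emeasure \<xi> (\<Union>s\<in>S. cyl (bits N s)) = (\<Sum>s\<in>S. emeasure \<xi> (cyl (bits N s)))"
    using assms cyl_in_sets_cantor cyl_bits_disjoint by (intro sum_emeasure[symmetric]) auto
  then show ?thesis by (simp add: emeasure_eq_measure sum_ennreal)
qed

lemma sum_measure_cyl_bits:
  assumes "prob_space \<xi>" "sets \<xi> = sets cantor"
  shows "(\<Sum>s<2 ^ N. measure \<xi> (cyl (bits N s))) = 1"
proof -
  interpret prob_space \<xi> by fact
  have "space \<xi> = UNIV"
    using sets_eq_imp_space_eq[OF assms(2)] unfolding cantor_def by (auto simp: space_PiM)
  moreover have "(\<Union>s\<in>{..<2^N}. cyl (bits N s)) = UNIV" using cyl_bits_cover by blast
  ultimately have "ennreal (\<Sum>s<2 ^ N. measure \<xi> (cyl (bits N s))) = ennreal 1"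
    using emeasure_UN_cyl_bits[OF assms, of "{..<2^N}" N] emeasure_space_1 by simp
  then show ?thesis by (subst (asm) ennreal_inj) (auto intro: sum_nonneg)
qed

primrec bernoulli_weight :: "real \<Rightarrow> bool list \<Rightarrow> real" where
  "bernoulli_weight c [] = 1"
| "bernoulli_weight c (b # \<sigma>) = (if b then 1 - c else c) * bernoulli_weight c \<sigma>"

lemma bernoulli_weight_nonneg: "0 \<le> c \<Longrightarrow> c \<le> 1 \<Longrightarrow> 0 \<le> bernoulli_weight c \<sigma>"
  by (induction \<sigma>) auto

lemma emeasure_bernoulli_cyl:
  assumes "0 \<le> c" "c \<le> 1"
  shows "emeasure (bernoulli_measure c) (cyl \<sigma>) = ennreal (bernoulli_weight c \<sigma>)"
proof -
  let ?M = "\<lambda>_::nat. measure_pmf (bernoulli_pmf (1 - c))"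
  have "cyl \<sigma> = prod_emb UNIV ?M {..<length \<sigma>} (\<Pi>\<^sub>E i\<in>{..<length \<sigma>}. {\<sigma> ! i})"
  proof (rule set_eqI)
    fix X :: "nat \<Rightarrow> bool"
    show "X \<in> cyl \<sigma> \<longleftrightarrow> X \<in> prod_emb UNIV ?M {..<length \<sigma>} (\<Pi>\<^sub>E i\<in>{..<length \<sigma>}. {\<sigma> ! i})"
      unfolding cyl_def by (simp add: prod_emb_def space_PiM PiE_iff) (simp add: Ball_def)
  qed
  then have "emeasure (bernoulli_measure c) (cyl \<sigma>)
      = (\<Prod>i<length \<sigma>. emeasure (?M i) {\<sigma> ! i})"
    unfolding bernoulli_measure_def
    by (simp only:) (rule emeasure_PiM_emb, auto intro: prob_space_measure_pmf)
  also have "\<dots> = (\<Prod>i<length \<sigma>. ennreal (if \<sigma> ! i then 1 - c else c))"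
    using assms by (intro prod.cong refl) (simp add: emeasure_pmf_single)
  also have "\<dots> = ennreal (\<Prod>i<length \<sigma>. if \<sigma> ! i then 1 - c else c)"
    using assms by (simp add: prod_ennreal)
  also have "(\<Prod>i<length \<sigma>. if \<sigma> ! i then 1 - c else c) = bernoulli_weight c \<sigma>"
    by (induction \<sigma>) (auto simp: prod.lessThan_Suc_shift simp del: prod.lessThan_Suc)
  finally show ?thesis .
qed

lemma sum_bernoulli_weight: fixes c :: real shows "(\<Sum>s<2 ^ N. bernoulli_weight c (bits N s)) = 1"
proof (induction N)
  case (Suc N)
  then show ?case
    by (simp only: sum_bits_Suc[of "bernoulli_weight c"])
      (simp add: sum.distrib flip: distrib_right sum_distrib_left)
qed simp

lemma sum_bernoulli_weight_zeros:
  fixes c :: real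
  shows "(\<Sum>s<2 ^ N. bernoulli_weight c (bits N s) * count_list (bits N s) False) = N * c"
proof (induction N)
  case (Suc N)
  let ?w = "\<lambda>t. bernoulli_weight c (bits N t)" and ?z = "\<lambda>t. real (count_list (bits N t) False)"
  have "(\<Sum>s<2 ^ Suc N. bernoulli_weight c (bits (Suc N) s) * count_list (bits (Suc N) s) False)
      = (\<Sum>t<2 ^ N. c * ?w t + (c * (?w t * ?z t) + (1 - c) * (?w t * ?z t)))"
    by (simp only: sum_bits_Suc[of "\<lambda>\<sigma>. bernoulli_weight c \<sigma> * count_list \<sigma> False"])
      (simp add: algebra_simps)
  also have "\<dots> = c + N * c" using Suc sum_bernoulli_weight[of c N]
    by (simp add: sum.distrib flip: sum_distrib_left) (simp add: algebra_simps)
  finally show ?case by (simp add: algebra_simps)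
qed simp

lemma sum_bernoulli_weight_variance:
  fixes c :: real
  shows "(\<Sum>s<2 ^ N. bernoulli_weight c (bits N s) * (count_list (bits N s) False - N * c)^2)
    = N * c * (1 - c)"
proof (induction N)
  case (Suc N)
  let ?w = "\<lambda>t. bernoulli_weight c (bits N t)"
    and ?z = "\<lambda>t. real (count_list (bits N t) False) - N * c"
  have "(\<Sum>s<2 ^ Suc N. bernoulli_weight c (bits (Suc N) s)
            * (count_list (bits (Suc N) s) False - Suc N * c)^2)
      = (\<Sum>t<2 ^ N. c * ?w t * ((1 - c) + ?z t)^2 + (1 - c) * ?w t * (?z t - c)^2)"
    by (simp only: sum_bits_Suc[of "\<lambda>\<sigma>. bernoulli_weight c \<sigma> * (count_list \<sigma> False - Suc N * c)^2"])
      (simp add: algebra_simps)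
  also have "\<dots> = (\<Sum>t<2 ^ N. c * (1 - c) * ?w t + 0 * (?w t * ?z t) + ?w t * (?z t)^2)"
    by (intro sum.cong refl) (simp add: power2_eq_square algebra_simps)
  also have "\<dots> = c * (1 - c) + N * c * (1 - c)"
  proof -
    have "(\<Sum>t<2 ^ N. ?w t * ?z t) = 0"
      using sum_bernoulli_weight_zeros[of c N] sum_bernoulli_weight[of c N]
      by (simp add: right_diff_distrib sum_subtractf flip: sum_distrib_right)
    then show ?thesis using Suc sum_bernoulli_weight[of c N]
      by (simp add: sum.distrib flip: sum_distrib_left)
  qed
  finally show ?case by (simp add: algebra_simps)
qed simp

lemma chebyshev_bernoulli_weight:
  fixes c d :: real
  assumes c: "0 \<le> c" "c \<le> 1" and d: "d > 0" and S: "S \<subseteq> {..<2 ^ N}"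
    and far: "\<And>s. s \<in> S \<Longrightarrow> d \<le> \<bar>count_list (bits N s) False - N * c\<bar>"
  shows "(\<Sum>s\<in>S. bernoulli_weight c (bits N s)) \<le> N / (4 * d^2)"
proof -
  let ?w = "\<lambda>s. bernoulli_weight c (bits N s)"
    and ?z = "\<lambda>s. real (count_list (bits N s) False) - N * c"
  have "(\<Sum>s\<in>S. ?w s) \<le> (\<Sum>s\<in>S. ?w s * (?z s)^2 / d^2)"
  proof (intro sum_mono)
    fix s assume "s \<in> S"
    then have "d^2 \<le> (?z s)^2" using far[of s] d power_mono[of d "\<bar>?z s\<bar>" 2] by simp
    then have "1 \<le> (?z s)^2 / d^2" using d by simp
    then show "?w s \<le> ?w s * (?z s)^2 / d^2"
      using bernoulli_weight_nonneg[OF c, of "bits N s"]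
      by (metis mult_left_mono mult.right_neutral times_divide_eq_right)
  qed
  also have "\<dots> \<le> (\<Sum>s<2^N. ?w s * (?z s)^2 / d^2)"
    using S bernoulli_weight_nonneg[OF c] by (intro sum_mono2) auto
  also have "\<dots> = N * (c * (1 - c)) / d^2"
    using sum_bernoulli_weight_variance[of c N] by (simp flip: sum_divide_distrib)
  also have "\<dots> \<le> N * (1/4) / d^2"
  proof -
    have "c * (1 - c) \<le> 1/4" using zero_le_power2[of "c - 1/2"]
      by (simp add: power2_eq_square algebra_simps)
    then show ?thesis using d by (intro divide_right_mono mult_left_mono) auto
  qed
  finally show ?thesis by simp
qed

section \<open>Martin-Loef tests made of blocks\<close>

text \<open>Given block lengths \<open>N k\<close> and a predicate \<open>S k s\<close> selecting blocks \<open>bits (N k) s\<close> at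
  stage \<open>k\<close>, level \<open>m\<close> of the test is the union of the selected cylinders of all stages \<open>k \<ge> m\<close>.\<close>

definition block_test :: "(nat \<Rightarrow> nat) \<Rightarrow> (nat \<Rightarrow> nat \<Rightarrow> bool) \<Rightarrow> nat set" where
  "block_test N S =
     {prod_encode (m, code (bits (N k) s)) | m k s. m \<le> k \<and> s < 2 ^ N k \<and> S k s}"

definition stage_set :: "(nat \<Rightarrow> nat) \<Rightarrow> (nat \<Rightarrow> nat \<Rightarrow> bool) \<Rightarrow> nat \<Rightarrow> (nat \<Rightarrow> bool) set" where
  "stage_set N S k = (\<Union>s\<in>{s. s < 2 ^ N k \<and> S k s}. cyl (bits (N k) s))"

lemma test_level_block_test: "test_level (block_test N S) m = (\<Union>k\<in>{m..}. stage_set N S k)"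
proof -
  have "prod_encode (m, code \<sigma>) \<in> block_test N S \<longleftrightarrow>
      (\<exists>k s. m \<le> k \<and> s < 2 ^ N k \<and> S k s \<and> \<sigma> = bits (N k) s)" for \<sigma>
    unfolding block_test_def by (auto simp: prod_encode_eq dest: code_inj)
  then show ?thesis unfolding test_level_def stage_set_def by auto
qed

lemma stage_set_in_sets_cantor: "stage_set N S k \<in> sets cantor"
  unfolding stage_set_def by (rule UN_cyl_bits_in_sets_cantor) simp

lemma ce_set_block_test:
  assumes N: "rec_computable 1 (\<lambda>e. N (e 0))" and S: "rec_decidable 2 (\<lambda>e. S (e 0) (e 1))"
  shows "ce_set (block_test N S)"
proof -
  have [rec_computable_intros]: "rec_computable n (\<lambda>e. N (f e))" if "rec_computable n f" for n f
    using rec_computable_comp[OF N, of n "\<lambda>_. f"] that by simp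
  have [rec_computable_intros]: "rec_decidable n (\<lambda>e. S (f e) (g e))"
    if "rec_computable n f" "rec_computable n g" for n f g
    using rec_computable_comp[OF S[unfolded rec_decidable_def], of n "\<lambda>i. if i = 0 then f else g"]
      that unfolding rec_decidable_def by simp
  text \<open>Search for \<open>m\<close>, \<open>k\<close> and \<open>s\<close> below a common bound \<open>j\<close>.\<close>
  let ?Q = "\<lambda>j x. \<exists>m<Suc j. \<exists>k<Suc j. \<exists>s<Suc j.
              x = prod_encode (m, bits_code (N k) s) \<and> m \<le> k \<and> s < 2 ^ N k \<and> S k s"
  have "block_test N S = {x. \<exists>j. ?Q j x}"
  proof (intro set_eqI iffI)
    fix x assume "x \<in> block_test N S"
    then obtain m k s where "x = prod_encode (m, code (bits (N k) s))" "m \<le> k" "s < 2 ^ N k" "S k s"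
      unfolding block_test_def by blast
    moreover have "m < Suc (m + k + s)" "k < Suc (m + k + s)" "s < Suc (m + k + s)" by simp_all
    ultimately have "?Q (m + k + s) x" unfolding bits_code_eq by blast
    then show "x \<in> {x. \<exists>j. ?Q j x}" by blast
  qed (auto simp: block_test_def bits_code_eq)
  moreover have "ce_set {x. \<exists>j. ?Q j x}"
    by (rule ce_set_projection) (intro rec_computable_intros; simp)
  ultimately show ?thesis by simp
qed

lemma emeasure_UN_geometric_tail:
  assumes "\<And>k. A k \<in> sets M" and "\<And>k. emeasure M (A k) \<le> ennreal ((1/2) ^ (k + 1))"
  shows "emeasure M (\<Union>k\<in>{m..}. A k) \<le> ennreal (1 / 2 ^ m)"
proof -
  have "(\<Union>k\<in>{m..}. A k) = (\<Union>i. A (i + m))"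
  proof (intro set_eqI iffI)
    fix x assume "x \<in> (\<Union>k\<in>{m..}. A k)"
    then obtain k where "m \<le> k" "x \<in> A k" by auto
    then show "x \<in> (\<Union>i. A (i + m))" by (intro UN_I[of "k - m"]) auto
  qed auto
  then have "emeasure M (\<Union>k\<in>{m..}. A k) \<le> (\<Sum>i. emeasure M (A (i + m)))"
    using assms(1) by (simp add: emeasure_subadditive_countably image_subset_iff)
  also have "\<dots> \<le> (\<Sum>i. ennreal ((1/2) ^ (i + m + 1)))"
    by (intro suminf_le summableI assms(2))
  also have "\<dots> = ennreal (\<Sum>i. (1/2) ^ (i + m + 1))"
    by (rule suminf_ennreal2) (simp_all add: power_add summable_mult2)
  also have "(\<Sum>i. (1/2::real) ^ (i + m + 1)) = 1 / 2 ^ m"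
  proof -
    have "(\<lambda>i. (1/2::real) ^ (m + 1) * (1/2) ^ i) sums ((1/2) ^ (m + 1) * (1 / (1 - 1/2)))"
      by (intro sums_mult geometric_sums) simp
    moreover have "(\<lambda>i. (1/2::real) ^ (i + m + 1)) = (\<lambda>i. (1/2) ^ (m + 1) * (1/2) ^ i)"
      by (simp add: power_add mult.commute)
    ultimately have "(\<lambda>i. (1/2::real) ^ (i + m + 1)) sums (1 / 2 ^ m)"
      by (simp add: power_one_over)
    then show ?thesis by (rule sums_unique[symmetric])
  qed
  finally show ?thesis .
qed

lemma martin_loef_test_block_test:
  assumes "sets M = sets cantor" "ce_set (block_test N S)"
    and "\<And>k. emeasure M (stage_set N S k) \<le> ennreal ((1/2) ^ (k + 1))"
  shows "martin_loef_test M (block_test N S)"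
  unfolding martin_loef_test_def test_level_block_test
  using assms stage_set_in_sets_cantor by (auto intro: emeasure_UN_geometric_tail)

text \<open>Every sequence avoiding some level of the test made of the complementary blocks lies in
  every level of the test, since each stage partitions Cantor space into cylinders.\<close>

lemma MLR_disjoint_complementary_block_tests:
  assumes "martin_loef_test M (block_test N S)"
    and "martin_loef_test M' (block_test N (\<lambda>k s. \<not> S k s))"
  shows "MLR M \<inter> MLR M' = {}"
proof (intro equals0I)
  fix X assume X: "X \<in> MLR M \<inter> MLR M'"
  then obtain m where m: "X \<notin> test_level (block_test N (\<lambda>k s. \<not> S k s)) m"
    using assms(2) unfolding MLR_def by blast
  have "X \<in> test_level (block_test N S) m'" for m'
  proof -
    obtain s where s: "s < 2 ^ N (max m m')" "X \<in> cyl (bits (N (max m m')) s)"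
      using cyl_bits_cover by blast
    with m have "S (max m m') s"
      unfolding test_level_block_test stage_set_def by fastforce
    with s show ?thesis unfolding test_level_block_test stage_set_def by fastforce
  qed
  then show False using X assms(1) unfolding MLR_def by blast
qed

section \<open>The diagonal bias\<close>

text \<open>At stage \<open>k\<close> the bias is known up to \<open>2 ^ - prec k\<close>, and blocks have length \<open>block_len k\<close>.
  A block is \<open>typical k L\<close> when its frequency of zeros lies in
  \<open>[(L - 1) / 2 ^ e, (L + 2) / 2 ^ e]\<close> with \<open>e = prec (Suc k)\<close>, a window of width \<open>3 / 2 ^ e\<close>
  around the candidate interval \<open>[L / 2 ^ e, (L + 1) / 2 ^ e]\<close> for the bias.\<close>

primrec prec :: "nat \<Rightarrow> nat" where
  "prec 0 = 0"
| "prec (Suc k) = prec k + k + 5"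

definition block_len :: "nat \<Rightarrow> nat" where
  "block_len k = 2 ^ (2 * prec (Suc k) + k + 3)"

definition typical :: "nat \<Rightarrow> nat \<Rightarrow> nat \<Rightarrow> bool" where
  "typical k L s \<longleftrightarrow>
     L * block_len k \<le> zero_count (block_len k) s * 2 ^ prec (Suc k) + block_len k \<and>
     zero_count (block_len k) s * 2 ^ prec (Suc k) \<le> (L + 2) * block_len k"

text \<open>Precision used to approximate the \<open>\<xi>\<close>-measure of each of the \<open>2 ^ block_len k\<close> blocks,
  so that the accumulated error is at most \<open>2 ^ -(k + 7)\<close>.\<close>

definition mass_prec :: "nat \<Rightarrow> nat" where
  "mass_prec k = block_len k + k + 8"

text \<open>A nonnegative dyadic approximation \<open>cyl_mass_approx a b x n / 2 ^ n\<close> of the number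
  \<open>rat_approx (a x n) (b x n)\<close>; the numerator \<open>int_decode (a x n)\<close> is nonnegative iff \<open>a x n\<close>
  is even, and then it is \<open>a x n div 2\<close>.\<close>

definition cyl_mass_approx :: "(nat \<Rightarrow> nat \<Rightarrow> nat) \<Rightarrow> (nat \<Rightarrow> nat \<Rightarrow> nat) \<Rightarrow> nat \<Rightarrow> nat \<Rightarrow> nat" where
  "cyl_mass_approx a b x n = (if even (a x n) then a x n div 2 * 2 ^ n div (b x n + 1) else 0)"

definition typical_mass_approx ::
    "(nat \<Rightarrow> nat \<Rightarrow> nat) \<Rightarrow> (nat \<Rightarrow> nat \<Rightarrow> nat) \<Rightarrow> nat \<Rightarrow> nat \<Rightarrow> nat" where
  "typical_mass_approx a b k L = (\<Sum>s<2 ^ block_len k.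
     if typical k L s then cyl_mass_approx a b (bits_code (block_len k) s) (mass_prec k) else 0)"

definition best_digit :: "(nat \<Rightarrow> nat \<Rightarrow> nat) \<Rightarrow> (nat \<Rightarrow> nat \<Rightarrow> nat) \<Rightarrow> nat \<Rightarrow> nat \<Rightarrow> nat" where
  "best_digit a b k p = rec_nat 0 (\<lambda>i j.
     if typical_mass_approx a b k (p * 2 ^ (k + 5) + Suc i)
          < typical_mass_approx a b k (p * 2 ^ (k + 5) + j)
     then Suc i else j) (2 ^ (k + 5) - 1)"

primrec bias_num :: "(nat \<Rightarrow> nat \<Rightarrow> nat) \<Rightarrow> (nat \<Rightarrow> nat \<Rightarrow> nat) \<Rightarrow> nat \<Rightarrow> nat" where
  "bias_num a b 0 = 0"
| "bias_num a b (Suc k) = bias_num a b k * 2 ^ (k + 5) + best_digit a b k (bias_num a b k)"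

definition bias_lower :: "(nat \<Rightarrow> nat \<Rightarrow> nat) \<Rightarrow> (nat \<Rightarrow> nat \<Rightarrow> nat) \<Rightarrow> nat \<Rightarrow> real" where
  "bias_lower a b k = real (bias_num a b k) / 2 ^ prec k"

definition bias_upper :: "(nat \<Rightarrow> nat \<Rightarrow> nat) \<Rightarrow> (nat \<Rightarrow> nat \<Rightarrow> nat) \<Rightarrow> nat \<Rightarrow> real" where
  "bias_upper a b k = (real (bias_num a b k) + 1) / 2 ^ prec k"

definition diagonal_bias :: "(nat \<Rightarrow> nat \<Rightarrow> nat) \<Rightarrow> (nat \<Rightarrow> nat \<Rightarrow> nat) \<Rightarrow> real" where
  "diagonal_bias a b = (SUP k. bias_lower a b k)"

lemma le_prec: "k \<le> prec k"
  by (induction k) simp_all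

lemma block_len_pos: "0 < block_len k"
  by (simp add: block_len_def)

lemma rec_nat_argmin:
  fixes f :: "nat \<Rightarrow> nat"
  defines "g \<equiv> rec_nat 0 (\<lambda>i j. if f (Suc i) < f j then Suc i else j)"
  shows "g n \<le> n" and "j \<le> n \<Longrightarrow> f (g n) \<le> f j"
proof -
  have "g n \<le> n \<and> (\<forall>j\<le>n. f (g n) \<le> f j)"
    by (induction n) (auto simp: g_def le_Suc_eq)
  then show "g n \<le> n" and "j \<le> n \<Longrightarrow> f (g n) \<le> f j" by auto
qed

lemma best_digit_less: "best_digit a b k p < 2 ^ (k + 5)"
proof -
  have "(0::nat) < 2 ^ (k + 5)" by simp
  then show ?thesis
    using rec_nat_argmin(1)[of "\<lambda>j. typical_mass_approx a b k (p * 2 ^ (k + 5) + j)" "2 ^ (k + 5) - 1"]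
    unfolding best_digit_def by linarith
qed

lemma best_digit_min:
  "j < 2 ^ (k + 5) \<Longrightarrow> typical_mass_approx a b k (p * 2 ^ (k + 5) + best_digit a b k p)
     \<le> typical_mass_approx a b k (p * 2 ^ (k + 5) + j)"
  using rec_nat_argmin(2)[of j "2 ^ (k + 5) - 1" "\<lambda>j. typical_mass_approx a b k (p * 2 ^ (k + 5) + j)"]
  unfolding best_digit_def by simp

subsection \<open>Computability of the construction\<close>

lemma rec_computable_prec [rec_computable_intros]:
  assumes "rec_computable n f"
  shows "rec_computable n (\<lambda>e. prec (f e))"
proof -
  have "prec k = rec_nat 0 (\<lambda>i acc. acc + i + 5) k" for k by (induction k) simp_all
  moreover have "rec_computable n (\<lambda>e. rec_nat 0 (\<lambda>i acc. acc + i + 5) (f e))"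
    by (intro rec_computable_intros assms) simp_all
  ultimately show ?thesis by simp
qed

lemma rec_computable_block_len [rec_computable_intros]:
  "rec_computable n f \<Longrightarrow> rec_computable n (\<lambda>e. block_len (f e))"
  unfolding block_len_def by (intro rec_computable_intros) simp_all

lemma rec_decidable_typical [rec_computable_intros]:
  "rec_computable n f \<Longrightarrow> rec_computable n g \<Longrightarrow> rec_computable n h
    \<Longrightarrow> rec_decidable n (\<lambda>e. typical (f e) (g e) (h e))"
  unfolding typical_def by (intro rec_computable_intros) simp_all

context
  fixes a b :: "nat \<Rightarrow> nat \<Rightarrow> nat"
  assumes a: "computable2 a" and b: "computable2 b"
begin

lemma rec_computable_typical_mass_approx [rec_computable_intros]:
  "rec_computable n f \<Longrightarrow> rec_computable n g
    \<Longrightarrow> rec_computable n (\<lambda>e. typical_mass_approx a b (f e) (g e))"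
  unfolding typical_mass_approx_def cyl_mass_approx_def mass_prec_def
  by (intro rec_computable_intros rec_computable_computable2[OF a] rec_computable_computable2[OF b]
      rec_computable_reindex[where s=Suc]) simp_all

lemma rec_computable_best_digit [rec_computable_intros]:
  "rec_computable n f \<Longrightarrow> rec_computable n g \<Longrightarrow> rec_computable n (\<lambda>e. best_digit a b (f e) (g e))"
  unfolding best_digit_def by (intro rec_computable_intros rec_computable_lift2) simp_all

lemma rec_computable_bias_num [rec_computable_intros]:
  assumes "rec_computable n f"
  shows "rec_computable n (\<lambda>e. bias_num a b (f e))"
proof -
  have "bias_num a b k = rec_nat 0 (\<lambda>i p. p * 2 ^ (i + 5) + best_digit a b i p) k" for k
    by (induction k) simp_all
  moreover have "rec_computable n (\<lambda>e. rec_nat 0 (\<lambda>i p. p * 2 ^ (i + 5) + best_digit a b i p) (f e))"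
    by (intro rec_computable_intros assms) simp_all
  ultimately show ?thesis by simp
qed

lemma ce_set_block_test_typical:
  "ce_set (block_test block_len (\<lambda>k s. typical k (bias_num a b (Suc k)) s))"
  "ce_set (block_test block_len (\<lambda>k s. \<not> typical k (bias_num a b (Suc k)) s))"
  by (rule ce_set_block_test; intro rec_computable_intros; simp)+

lemma computable1_bias_num: "computable1 (\<lambda>k. 2 * bias_num a b k)"
  by (rule computable1_if_rec_computable) (intro rec_computable_intros; simp)

end

lemma computable1_prec: "computable1 (\<lambda>k. 2 ^ prec k - 1)"
  by (rule computable1_if_rec_computable) (intro rec_computable_intros; simp)

lemma incseq_bias_lower: "incseq (bias_lower a b)"
proof (rule incseq_SucI)
  fix k
  have "real (bias_num a b k) * 2 ^ (k + 5) \<le> real (bias_num a b (Suc k))" by simp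
  then show "bias_lower a b k \<le> bias_lower a b (Suc k)"
    unfolding bias_lower_def by (simp add: power_add field_simps)
qed

lemma decseq_bias_upper: "decseq (bias_upper a b)"
proof (rule decseq_SucI)
  fix k
  have "real (Suc (best_digit a b k (bias_num a b k))) \<le> real ((2::nat) ^ (k + 5))"
    by (simp only: of_nat_le_iff) (rule Suc_leI[OF best_digit_less])
  then have "real (bias_num a b (Suc k)) + 1 \<le> (real (bias_num a b k) + 1) * 2 ^ (k + 5)"
    by (simp add: algebra_simps)
  then have "(real (bias_num a b (Suc k)) + 1) * 2 ^ prec k
      \<le> (real (bias_num a b k) + 1) * 2 ^ (k + 5) * 2 ^ prec k"
    by (rule mult_right_mono) simp
  then show "bias_upper a b (Suc k) \<le> bias_upper a b k"
    unfolding bias_upper_def by (simp add: power_add field_simps del: bias_num.simps)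
qed

lemma bias_lower_le_upper: "bias_lower a b k \<le> bias_upper a b m"
proof -
  have "bias_lower a b k \<le> bias_lower a b (max k m)" by (rule incseqD[OF incseq_bias_lower]) simp
  also have "\<dots> \<le> bias_upper a b (max k m)"
    unfolding bias_lower_def bias_upper_def by (simp add: divide_right_mono)
  also have "\<dots> \<le> bias_upper a b m" by (rule decseqD[OF decseq_bias_upper]) simp
  finally show ?thesis .
qed

lemma diagonal_bias_bounds: "bias_lower a b k \<le> diagonal_bias a b" "diagonal_bias a b \<le> bias_upper a b k"
proof -
  have "bdd_above (range (bias_lower a b))" by (intro bdd_aboveI2[where M="bias_upper a b 0"] bias_lower_le_upper)
  then show "bias_lower a b k \<le> diagonal_bias a b" unfolding diagonal_bias_def by (rule cSUP_upper[rotated]) simp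
  show "diagonal_bias a b \<le> bias_upper a b k"
    unfolding diagonal_bias_def by (rule cSUP_least) (auto intro: bias_lower_le_upper)
qed

lemma diagonal_bias_between_0_1: "0 \<le> diagonal_bias a b" "diagonal_bias a b \<le> 1"
  using diagonal_bias_bounds[of a b 0] by (auto simp: bias_lower_def bias_upper_def)

lemma computable_real_diagonal_bias:
  assumes "computable2 a" "computable2 b"
  shows "computable_real (diagonal_bias a b)"
  unfolding computable_real_def
proof (intro exI conjI allI)
  show "computable1 (\<lambda>k. 2 * bias_num a b k)" by (rule computable1_bias_num[OF assms])
  show "computable1 (\<lambda>k. 2 ^ prec k - 1)" by (rule computable1_prec)
  fix n
  have "int_decode (2 * p) = int p" for p by (simp add: int_decode_def sum_decode_def)
  then have approx: "rat_approx (2 * bias_num a b n) (2 ^ prec n - 1) = bias_lower a b n"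
    unfolding rat_approx_def bias_lower_def by simp
  have "\<bar>diagonal_bias a b - bias_lower a b n\<bar> \<le> bias_upper a b n - bias_lower a b n"
    using diagonal_bias_bounds[of a b n] by simp
  also have "\<dots> = 1 / 2 ^ prec n" unfolding bias_upper_def bias_lower_def by (simp add: field_simps)
  also have "\<dots> \<le> 1 / 2 ^ n" using le_prec[of n] by (intro divide_left_mono power_increasing) auto
  finally show "\<bar>diagonal_bias a b - rat_approx (2 * bias_num a b n) (2 ^ prec n - 1)\<bar> \<le> 1 / 2 ^ n"
    unfolding approx .
qed

subsection \<open>The typical blocks have small \<open>\<xi>\<close>-measure\<close>

definition typical_mass :: "(nat \<Rightarrow> bool) measure \<Rightarrow> nat \<Rightarrow> nat \<Rightarrow> real" where
  "typical_mass \<xi> k L =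
     (\<Sum>s<2 ^ block_len k. if typical k L s then measure \<xi> (cyl (bits (block_len k) s)) else 0)"

lemma cyl_mass_approx_error:
  assumes approx: "\<bar>x - rat_approx A B\<bar> \<le> 1 / 2 ^ n" and "0 \<le> x"
  shows "\<bar>x - real (if even A then A div 2 * 2 ^ n div (B + 1) else 0) / 2 ^ n\<bar> \<le> 2 / 2 ^ n"
proof -
  define P where "P = (if even A then A div 2 else 0)"
  define q where "q = P * 2 ^ n div (B + 1)"
  have "max 0 (rat_approx A B) = real P / real (B + 1)"
  proof (cases "even A")
    case True
    then have "int_decode A = int (A div 2)" by (simp add: int_decode_def sum_decode_def)
    then show ?thesis using True by (simp add: rat_approx_def P_def)
  next
    case False
    then have "int_decode A < 0" by (simp add: int_decode_def sum_decode_def)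
    then have "rat_approx A B \<le> 0" unfolding rat_approx_def by (simp add: divide_nonpos_pos)
    then show ?thesis using False by (simp add: P_def)
  qed
  moreover have "\<bar>x - max 0 (rat_approx A B)\<bar> \<le> 1 / 2 ^ n"
    using assms by (cases "0 \<le> rat_approx A B") (auto simp: abs_le_iff max_def)
  moreover have "real q / 2 ^ n \<le> real P / (B + 1)" and "real P / (B + 1) < (real q + 1) / 2 ^ n"
  proof -
    have "q * (B + 1) \<le> P * 2 ^ n" unfolding q_def by (rule div_times_less_eq_dividend)
    moreover have "P * 2 ^ n < (B + 1) + q * (B + 1)"
      unfolding q_def by (rule dividend_less_div_times) simp
    ultimately have "q * (B + 1) \<le> P * 2 ^ n" and "P * 2 ^ n < (q + 1) * (B + 1)"
      by (simp_all add: algebra_simps)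
    then have "real (q * (B + 1)) \<le> real (P * 2 ^ n)" and "real (P * 2 ^ n) < real ((q + 1) * (B + 1))"
      by (simp_all only: of_nat_le_iff of_nat_less_iff)
    then have "real q * (B + 1) \<le> real P * 2 ^ n" and "real P * 2 ^ n < (real q + 1) * (B + 1)"
      by (simp_all add: algebra_simps)
    then show "real q / 2 ^ n \<le> real P / (B + 1)" and "real P / (B + 1) < (real q + 1) / 2 ^ n"
      by (simp_all add: field_simps)
  qed
  moreover have "(if even A then A div 2 * 2 ^ n div (B + 1) else 0) = q"
    by (simp add: P_def q_def)
  ultimately show ?thesis by (simp add: abs_le_iff add_divide_distrib)
qed

lemma typical_mass_approx_error:
  assumes \<xi>: "prob_space \<xi>"
    and approx: "\<forall>\<sigma> n. \<bar>measure \<xi> (cyl \<sigma>) - rat_approx (a (code \<sigma>) n) (b (code \<sigma>) n)\<bar> \<le> 1 / 2 ^ n"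
  shows "\<bar>typical_mass \<xi> k L - typical_mass_approx a b k L / 2 ^ mass_prec k\<bar> \<le> (1/2) ^ (k + 7)"
proof -
  let ?N = "block_len k" and ?n = "mass_prec k"
  let ?err = "\<lambda>s. measure \<xi> (cyl (bits ?N s)) - real (cyl_mass_approx a b (code (bits ?N s)) ?n) / 2 ^ ?n"
  have "typical_mass_approx a b k L / 2 ^ ?n
      = (\<Sum>s<2 ^ ?N. if typical k L s then real (cyl_mass_approx a b (code (bits ?N s)) ?n) / 2 ^ ?n else 0)"
    unfolding typical_mass_approx_def bits_code_eq of_nat_sum sum_divide_distrib
    by (intro sum.cong refl) simp
  then have "\<bar>typical_mass \<xi> k L - typical_mass_approx a b k L / 2 ^ ?n\<bar>
      = \<bar>\<Sum>s<2 ^ ?N. if typical k L s then ?err s else 0\<bar>"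
    unfolding typical_mass_def by (simp add: sum_subtractf[symmetric] if_distrib)
      (intro arg_cong[where f=abs] sum.cong refl; simp)
  also have "\<dots> \<le> (\<Sum>s<2 ^ ?N. \<bar>if typical k L s then ?err s else 0\<bar>)"
    by (rule sum_abs)
  also have "\<dots> \<le> (\<Sum>s<(2::nat) ^ ?N. 2 / 2 ^ ?n :: real)"
  proof (intro sum_mono)
    fix s
    have "\<bar>?err s\<bar> \<le> 2 / 2 ^ ?n"
      unfolding cyl_mass_approx_def using approx
      by (intro cyl_mass_approx_error) (auto simp: measure_nonneg)
    then show "\<bar>if typical k L s then ?err s else 0\<bar> \<le> 2 / 2 ^ ?n" by auto
  qed
  also have "\<dots> = (1/2) ^ (k + 7)"
    unfolding mass_prec_def by (simp add: power_add field_simps)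
  finally show ?thesis .
qed

text \<open>The windows of \<open>L\<close> and \<open>L'\<close> are disjoint once \<open>|L - L'| \<ge> 4\<close>.\<close>

lemma card_typical_le_4: "card {j. j < M \<and> typical k (p * M + j) s} \<le> 4"
proof (cases "{j. j < M \<and> typical k (p * M + j) s} = {}")
  case False
  let ?T = "{j. j < M \<and> typical k (p * M + j) s}"
  define j0 where "j0 = Min ?T"
  have fin: "finite ?T" by simp
  have j0: "j0 \<in> ?T" "\<And>j. j \<in> ?T \<Longrightarrow> j0 \<le> j"
    unfolding j0_def using Min_in[OF fin False] fin by auto
  have "?T \<subseteq> {j0..j0 + 3}"
  proof
    fix j assume j: "j \<in> ?T"
    let ?Z = "zero_count (block_len k) s * 2 ^ prec (Suc k)"
    have "(p * M + j) * block_len k \<le> ?Z + block_len k" using j unfolding typical_def by simp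
    also have "?Z \<le> (p * M + j0 + 2) * block_len k" using j0(1) unfolding typical_def by simp
    finally have "(p * M + j) * block_len k \<le> (p * M + j0 + 3) * block_len k"
      by (simp add: algebra_simps)
    then show "j \<in> {j0..j0 + 3}" using block_len_pos[of k] j0(2)[OF j] by simp
  qed
  then have "card ?T \<le> card {j0..j0 + 3}" by (intro card_mono) auto
  then show ?thesis by simp
qed (simp only: card.empty)

lemma sum_typical_mass_le_4:
  assumes "prob_space \<xi>" "sets \<xi> = sets cantor"
  shows "(\<Sum>j<M. typical_mass \<xi> k (p * M + j)) \<le> 4"
proof -
  let ?m = "\<lambda>s. measure \<xi> (cyl (bits (block_len k) s))"
  have "(\<Sum>j<M. typical_mass \<xi> k (p * M + j))
      = (\<Sum>s<2 ^ block_len k. \<Sum>j<M. if typical k (p * M + j) s then ?m s else 0)"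
    unfolding typical_mass_def by (rule sum.swap)
  also have "\<dots> = (\<Sum>s<2 ^ block_len k. card {j. j < M \<and> typical k (p * M + j) s} * ?m s)"
    by (intro sum.cong refl) (simp add: sum.If_cases Int_def lessThan_def)
  also have "\<dots> \<le> (\<Sum>s<2 ^ block_len k. 4 * ?m s)"
    using card_typical_le_4 measure_nonneg
    by (intro sum_mono mult_right_mono) auto
  also have "\<dots> = 4" using sum_measure_cyl_bits[OF assms] by (simp flip: sum_distrib_left)
  finally show ?thesis .
qed

text \<open>Among the \<open>M = 2 ^ (k + 5)\<close> candidates the masses sum to at most \<open>4\<close>, so the one with
  the least approximate mass has mass at most \<open>4 / M\<close> plus twice the approximation error.\<close>

lemma typical_mass_bias_num:
  assumes \<xi>: "prob_space \<xi>" "sets \<xi> = sets cantor"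
    and approx: "\<forall>\<sigma> n. \<bar>measure \<xi> (cyl \<sigma>) - rat_approx (a (code \<sigma>) n) (b (code \<sigma>) n)\<bar> \<le> 1 / 2 ^ n"
  shows "typical_mass \<xi> k (bias_num a b (Suc k)) \<le> (1/2) ^ (k + 2)"
proof -
  define M :: nat where "M = 2 ^ (k + 5)"
  define p where "p = bias_num a b k"
  define j\<^sub>0 where "j\<^sub>0 = best_digit a b k p"
  define A where "A j = typical_mass_approx a b k (p * M + j) / 2 ^ mass_prec k" for j
  define E where "E j = typical_mass \<xi> k (p * M + j)" for j
  define d :: real where "d = (1/2) ^ (k + 7)"
  have err: "\<bar>E j - A j\<bar> \<le> d" for j
    unfolding E_def A_def d_def by (rule typical_mass_approx_error[OF \<xi>(1) approx])
  have "M * A j\<^sub>0 = (\<Sum>j<M. A j\<^sub>0)" by simp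
  also have "\<dots> \<le> (\<Sum>j<M. A j)"
    using best_digit_min unfolding A_def j\<^sub>0_def M_def by (intro sum_mono divide_right_mono) auto
  also have "\<dots> \<le> (\<Sum>j<M. E j + d)"
  proof (rule sum_mono)
    fix j show "A j \<le> E j + d" using err[of j] by (simp add: abs_le_iff)
  qed
  also have "\<dots> = (\<Sum>j<M. E j) + M * d" by (simp add: sum.distrib)
  also have "\<dots> \<le> 4 + M * d" using sum_typical_mass_le_4[OF \<xi>] unfolding E_def by simp
  finally have "A j\<^sub>0 \<le> 4 / M + d" unfolding M_def by (simp add: field_simps)
  then have "E j\<^sub>0 \<le> 4 / M + 2 * d" using err[of j\<^sub>0] by (simp add: abs_le_iff)
  also have "\<dots> \<le> (1/2) ^ (k + 2)" unfolding M_def d_def by (simp add: power_add field_simps)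
  finally show ?thesis unfolding E_def p_def j\<^sub>0_def M_def by simp
qed

subsection \<open>The atypical blocks have small \<open>\<mu>\<^sub>c\<close>-measure\<close>

lemma atypical_far_from_mean:
  fixes c :: real
  assumes c: "L / 2 ^ prec (Suc k) \<le> c" "c \<le> (L + 1) / 2 ^ prec (Suc k)"
    and "\<not> typical k L s"
  shows "block_len k / 2 ^ prec (Suc k)
           \<le> \<bar>count_list (bits (block_len k) s) False - block_len k * c\<bar>"
proof -
  define N where "N = block_len k"
  define e where "e = prec (Suc k)"
  define Z where "Z = zero_count N s"
  have pos: "(0::real) < 2 ^ e" by simp
  have "L * N / 2 ^ e \<le> N * c" and "N * c \<le> (L + 1) * N / 2 ^ e"
    using mult_right_mono[OF c(1), of N] mult_right_mono[OF c(2), of N]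
    unfolding e_def[symmetric] by (simp_all add: algebra_simps)
  moreover from assms(3) consider "Z * 2 ^ e + N < L * N" | "(L + 2) * N < Z * 2 ^ e"
    unfolding typical_def N_def[symmetric] e_def[symmetric] Z_def[symmetric] by linarith
  then have "real Z + N / 2 ^ e < L * N / 2 ^ e \<or> (real L + 2) * N / 2 ^ e < real Z"
  proof cases
    case 1
    then have "real (Z * 2 ^ e + N) < real (L * N)" by (simp only: of_nat_less_iff)
    then have "(real Z * 2 ^ e + N) / 2 ^ e < real L * N / 2 ^ e"
      using pos by (intro divide_strict_right_mono) simp_all
    then show ?thesis using pos by (simp add: add_divide_distrib)
  next
    case 2
    then have "real ((L + 2) * N) < real (Z * 2 ^ e)" by (simp only: of_nat_less_iff)
    then have "(real L + 2) * N / 2 ^ e < real Z * 2 ^ e / 2 ^ e"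
      using pos by (intro divide_strict_right_mono) (simp_all add: algebra_simps)
    then show ?thesis using pos by simp
  qed
  moreover have "(real L + 2) * N / 2 ^ e = (L + 1) * N / 2 ^ e + N / 2 ^ e"
    by (simp add: add_divide_distrib[symmetric] algebra_simps)
  ultimately have "real Z + N / 2 ^ e \<le> N * c \<or> N * c + N / 2 ^ e \<le> real Z"
    by linarith
  then show ?thesis
    unfolding N_def[symmetric] e_def[symmetric] zero_count_eq[symmetric] Z_def[symmetric] by auto
qed

lemma sum_atypical_bernoulli_weight:
  fixes c :: real
  assumes "0 \<le> c" "c \<le> 1"
    and "L / 2 ^ prec (Suc k) \<le> c" "c \<le> (L + 1) / 2 ^ prec (Suc k)"
  shows "(\<Sum>s\<in>{s. s < 2 ^ block_len k \<and> \<not> typical k L s}. bernoulli_weight c (bits (block_len k) s))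
          \<le> (1/2) ^ (k + 5)"
proof -
  define x :: real where "x = 2 ^ prec (Suc k)"
  define d :: real where "d = block_len k / x"
  have x: "0 < x" unfolding x_def by simp
  have "real (block_len k) = 2 ^ (prec (Suc k) + (prec (Suc k) + (k + 3)))"
    unfolding block_len_def by (simp only: mult_2 add.assoc of_nat_power of_nat_numeral)
  also have "\<dots> = x * x * 2 ^ k * 8"
    unfolding x_def by (simp only: power_add) (simp add: ac_simps)
  finally have N: "real (block_len k) = x * x * 2 ^ k * 8" .
  have "(\<Sum>s\<in>{s. s < 2 ^ block_len k \<and> \<not> typical k L s}. bernoulli_weight c (bits (block_len k) s))
      \<le> block_len k / (4 * d^2)"
  proof (rule chebyshev_bernoulli_weight[OF assms(1,2)])
    show "0 < d" unfolding d_def using x block_len_pos[of k] by simp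
  qed (use atypical_far_from_mean[OF assms(3,4)] in \<open>auto simp: d_def x_def\<close>)
  also have "block_len k / (4 * d^2) = (1/2) ^ (k + 5)"
    unfolding d_def N using x by (simp add: power2_eq_square power_add power_one_over field_simps)
  finally show ?thesis .
qed

lemma martin_loef_test_typical:
  assumes \<xi>: "prob_space \<xi>" "sets \<xi> = sets cantor" and ab: "computable2 a" "computable2 b"
    and approx: "\<forall>\<sigma> n. \<bar>measure \<xi> (cyl \<sigma>) - rat_approx (a (code \<sigma>) n) (b (code \<sigma>) n)\<bar> \<le> 1 / 2 ^ n"
  shows "martin_loef_test \<xi> (block_test block_len (\<lambda>k s. typical k (bias_num a b (Suc k)) s))"
proof (rule martin_loef_test_block_test[OF \<xi>(2) ce_set_block_test_typical(1)[OF ab]])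
  fix k
  have "emeasure \<xi> (stage_set block_len (\<lambda>k s. typical k (bias_num a b (Suc k)) s) k)
      = typical_mass \<xi> k (bias_num a b (Suc k))"
    unfolding stage_set_def typical_mass_def
    by (subst emeasure_UN_cyl_bits[OF \<xi>]) (auto simp: sum.If_cases Int_def lessThan_def)
  also have "\<dots> \<le> ennreal ((1/2) ^ (k + 1))"
    by (intro ennreal_leI order.trans[OF typical_mass_bias_num[OF \<xi> approx]] power_decreasing)
      simp_all
  finally show "emeasure \<xi> (stage_set block_len (\<lambda>k s. typical k (bias_num a b (Suc k)) s) k)
      \<le> ennreal ((1/2) ^ (k + 1))" .
qed

lemma martin_loef_test_atypical:
  assumes ab: "computable2 a" "computable2 b"
  defines "c \<equiv> diagonal_bias a b"
  shows "martin_loef_test (bernoulli_measure c)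
           (block_test block_len (\<lambda>k s. \<not> typical k (bias_num a b (Suc k)) s))"
proof (rule martin_loef_test_block_test[OF sets_bernoulli_measure ce_set_block_test_typical(2)[OF ab]])
  fix k
  let ?S = "{s. s < 2 ^ block_len k \<and> \<not> typical k (bias_num a b (Suc k)) s}"
  have c: "0 \<le> c" "c \<le> 1" unfolding c_def by (rule diagonal_bias_between_0_1)+
  have "emeasure (bernoulli_measure c) (\<Union>s\<in>?S. cyl (bits (block_len k) s))
      = (\<Sum>s\<in>?S. emeasure (bernoulli_measure c) (cyl (bits (block_len k) s)))"
    by (rule sum_emeasure[symmetric])
      (auto simp: sets_bernoulli_measure cyl_in_sets_cantor intro: cyl_bits_disjoint)
  also have "\<dots> = ennreal (\<Sum>s\<in>?S. bernoulli_weight c (bits (block_len k) s))"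
    using c by (simp add: emeasure_bernoulli_cyl bernoulli_weight_nonneg sum_ennreal)
  also have "\<dots> \<le> ennreal ((1/2) ^ (k + 1))"
    using diagonal_bias_bounds[of a b "Suc k"] power_decreasing[of "k + 1" "k + 5" "1/2::real"]
      sum_atypical_bernoulli_weight[OF c, of "bias_num a b (Suc k)" k]
    unfolding c_def bias_lower_def bias_upper_def by (intro ennreal_leI) simp
  finally show "emeasure (bernoulli_measure c)
      (stage_set block_len (\<lambda>k s. \<not> typical k (bias_num a b (Suc k)) s) k) \<le> ennreal ((1/2) ^ (k + 1))"
    unfolding stage_set_def .
qed

theorem mainTheorem7:
  shows "\<not> (\<exists>\<xi> :: (nat \<Rightarrow> bool) measure.
            prob_space \<xi> \<and> sets \<xi> = sets cantor \<and> computable_measure \<xi> \<and>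
            (\<forall>c :: real. 0 \<le> c \<and> c \<le> 1 \<and> computable_real c \<longrightarrow>
               MLR \<xi> \<inter> MLR (bernoulli_measure c) \<noteq> {}))"
proof
  assume "\<exists>\<xi> :: (nat \<Rightarrow> bool) measure.
            prob_space \<xi> \<and> sets \<xi> = sets cantor \<and> computable_measure \<xi> \<and>
            (\<forall>c :: real. 0 \<le> c \<and> c \<le> 1 \<and> computable_real c \<longrightarrow>
               MLR \<xi> \<inter> MLR (bernoulli_measure c) \<noteq> {})"
  then obtain \<xi> where \<xi>: "prob_space \<xi>" "sets \<xi> = sets cantor" "computable_measure \<xi>"
    and meets: "\<And>c. 0 \<le> c \<Longrightarrow> c \<le> 1 \<Longrightarrow> computable_real c \<Longrightarrow> MLR \<xi> \<inter> MLR (bernoulli_measure c) \<noteq> {}"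
    by blast
  obtain a b where ab: "computable2 a" "computable2 b"
    and approx: "\<forall>\<sigma> n. \<bar>measure \<xi> (cyl \<sigma>) - rat_approx (a (code \<sigma>) n) (b (code \<sigma>) n)\<bar> \<le> 1 / 2 ^ n"
    using \<xi>(3) unfolding computable_measure_def by blast
  have "MLR \<xi> \<inter> MLR (bernoulli_measure (diagonal_bias a b)) = {}"
    by (rule MLR_disjoint_complementary_block_tests[OF martin_loef_test_typical[OF \<xi>(1,2) ab approx]
          martin_loef_test_atypical[OF ab]])
  with meets diagonal_bias_between_0_1 computable_real_diagonal_bias[OF ab] show False by blast
qed

end
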